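(* Given $i \in [n-3]$, $j \in [n-2]$ and $k\in [n-1]$ such that $i\leq j\leq k$, we have $\langle i,j,k\rangle\in \mathcal{W}^{\Theta}$ if, and only if, one of the following happens: (1) $a_i,a_j,a_k \not\in\Theta$; (2) $j=i+1$, $a_i \in \Theta$ and $a_{i+1},a_k \not\in\Theta$; (3) $k=j+1$, $a_j \in \Theta$ and $a_i, a_{j+1} \not\in\Theta$; (4) $k-1=j=i+1$, $a_i,a_{i+1} \in \Theta$ and $a_{i+2} \not\in\Theta$.
   Context: Let $n\geq 2$ and $[m]=\{1,\dots,m\}$. Let $S_n$ be the symmetric group (Weyl group of type $A_{n-1}$), generated by the simple reflections $s_i=(i,i+1)$, $i\in[n-1]$, with simple roots $\Sigma=\{a_1,\dots,a_{n-1}\}$. For $\Theta\subset\Sigma$, let $\mathcal{W}^{\Theta}=\{w\in S_n : \ell(w)<\ell(ws_i) \text{ for all } a_i\in\Theta\}$ be the set of minimal length representatives of the cosets of the parabolic subgroup $\mathcal{W}_\Theta=\langle s_i : a_i\in\Theta\rangle$; equivalently, writing $\Sigma\setminus\Theta=\{a_{k_1},\dots,a_{k_r}\}$ with $k_1<\dots<k_r$, $\mathcal{W}^{\Theta}$ consists of the permutations $w$ (in one-line notation $w(1)\cdots w(n)$) whose descents can occur only at positions $k_1,\dots,k_r$. The code of $w\in S_n$ is $\alpha=(\alpha_1,\dots,\alpha_{n-1})$ with $\alpha_i=\#\{k>i : w(k)<w(i)\}$. The code spectrum of $w$ is the unique weakly increasing sequence $0<b_1\leq b_2\leq\cdots\leq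 b_l<n$ such that $\alpha_i=\#\{j : b_j=i\}$ for each $i$; the permutation with code spectrum $b_1,\dots,b_l$ is denoted $\langle b_1,\dots,b_l\rangle$. Thus $\langle i,j,k\rangle$ denotes the permutation of length $3$ whose code has one box in each of rows $i$, $j$, $k$ (counted with multiplicity). *)

theory Defs
  imports "HOL-Combinatorics.Permutations" "HOL-Library.Multiset"
begin

definition perm_code :: "nat \<Rightarrow> (nat \<Rightarrow> nat) \<Rightarrow> nat \<Rightarrow> nat" where
  "perm_code n w i = card {k \<in> {i<..n}. w k < w i}"

definition spectrum_perm :: "nat \<Rightarrow> nat list \<Rightarrow> (nat \<Rightarrow> nat)" where
  "spectrum_perm n bs = (THE w. w permutes {1..n} \<and>
      (\<forall>i \<in> {1..n-1}. perm_code n w i = count (mset bs) i))"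

text \<open>Coxeter length in type A_{n-1} = number of inversions.\<close>
definition perm_length :: "nat \<Rightarrow> (nat \<Rightarrow> nat) \<Rightarrow> nat" where
  "perm_length n w = card {(a, b). a \<in> {1..n} \<and> b \<in> {1..n} \<and> a < b \<and> w b < w a}"

definition simple_refl :: "nat \<Rightarrow> nat \<Rightarrow> nat" where
  "simple_refl i = transpose i (Suc i)"

text \<open>W^Theta, with Theta given as the set of indices i of the simple roots a_i in Theta.\<close>
definition min_reps :: "nat \<Rightarrow> nat set \<Rightarrow> (nat \<Rightarrow> nat) set" where
  "min_reps n Theta = {w. w permutes {1..n} \<and>
      (\<forall>i \<in> Theta. perm_length n w < perm_length n (w \<circ> simple_refl i))}"

end

theory Submission
  imports Defs
begin

text \<open>The code \<open>\<alpha>\<close> is a bijection from the permutations of \<open>[n]\<close> onto the vectors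
  with \<open>\<alpha>\<^sub>p \<le> n - p\<close>: \<open>w(p)\<close> is the element of rank \<open>\<alpha>\<^sub>p\<close> among the values not used
  at positions before \<open>p\<close>, and both sets have \<open>n!\<close> elements. Moreover \<open>w(p) < w(p+1)\<close>,
  i.e. \<open>\<ell>(w s\<^sub>p) > \<ell>(w)\<close>, iff \<open>\<alpha>\<^sub>p \<le> \<alpha>\<^sub>p\<^sub>+\<^sub>1\<close>. Hence a permutation with given code
  spectrum lies in \<open>W\<^sup>\<Theta>\<close> iff for every \<open>a\<^sub>p \<in> \<Theta>\<close> row \<open>p\<close> has no more boxes than
  row \<open>p+1\<close>; for three boxes in rows \<open>i \<le> j \<le> k\<close> this says \<open>a\<^sub>k \<notin> \<Theta>\<close>,
  \<open>a\<^sub>j \<in> \<Theta> \<Longrightarrow> k = j+1\<close> and \<open>a\<^sub>i \<in> \<Theta> \<Longrightarrow> j = i+1\<close>, which is the stated case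
  distinction.\<close>

lemma card_less_eq_imp_eq:
  fixes a b :: "'a::linorder"
  assumes "finite S" "a \<in> S" "b \<in> S"
    and rank: "card {x \<in> S. x < a} = card {x \<in> S. x < b}"
  shows "a = b"
proof (rule ccontr)
  have rank_less: "card {x \<in> S. x < c} < card {x \<in> S. x < d}" if "c \<in> S" "c < d" for c d
    using assms(1) that by (intro psubset_card_mono) auto
  assume "a \<noteq> b"
  then consider "a < b" | "b < a" by (auto simp: neq_iff)
  then show False
    using rank_less[of a b] rank_less[of b a] assms(2,3) rank by cases auto
qed

lemma permutes_image_atLeastAtMost:
  fixes u :: "nat \<Rightarrow> nat"
  assumes "u permutes {1..n}" "1 \<le> q"
  shows "u ` {q..n} = {1..n} - u ` {1..<q}"
proof -
  have "{q..n} = {1..n} - {1..<q}" using assms(2) by auto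
  then show ?thesis
    using permutes_inj[OF assms(1)] permutes_image[OF assms(1)] by (simp add: image_set_diff)
qed

lemma perm_code_eq_card_image:
  assumes "u permutes {1..n}" "p \<in> {1..n}"
  shows "perm_code n u p = card {x \<in> u ` {p..n}. x < u p}"
proof -
  have "{p..n} = insert p {p<..n}" using assms(2) by auto
  then have "{x \<in> u ` {p..n}. x < u p} = u ` {q \<in> {p<..n}. u q < u p}" by auto
  moreover have "inj_on u {q \<in> {p<..n}. u q < u p}"
    using permutes_inj[OF assms(1)] by (rule inj_on_subset) simp
  ultimately show ?thesis unfolding perm_code_def by (simp add: card_image)
qed

lemma permutes_eq_if_perm_code_eq:
  assumes w: "w permutes {1..n}" and v: "v permutes {1..n}"
    and code: "\<And>p. p \<in> {1..n} \<Longrightarrow> perm_code n w p = perm_code n v p"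
  shows "w = v"
proof
  fix q
  show "w q = v q"
  proof (induction q rule: less_induct)
    case (less q)
    show ?case
    proof (cases "q \<in> {1..n}")
      case False
      then show ?thesis using w v by (simp add: permutes_not_in)
    next
      case True
      then have "w ` {1..<q} = v ` {1..<q}" using less by auto
      then have same_tail: "w ` {q..n} = v ` {q..n}"
        using True by (simp add: permutes_image_atLeastAtMost[OF w] permutes_image_atLeastAtMost[OF v])
      show ?thesis
      proof (rule card_less_eq_imp_eq[of "v ` {q..n}"])
        have "w q \<in> w ` {q..n}" using True by simp
        then show "w q \<in> v ` {q..n}" by (simp only: same_tail)
        show "v q \<in> v ` {q..n}" using True by simp
        show "card {x \<in> v ` {q..n}. x < w q} = card {x \<in> v ` {q..n}. x < v q}"
          using code[OF True] same_tail
          by (simp add: perm_code_eq_card_image[OF w True] perm_code_eq_card_image[OF v True])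
      qed simp
    qed
  qed
qed

lemma perm_code_le: "perm_code n w p \<le> n - p"
proof -
  have "perm_code n w p \<le> card {p<..n}"
    unfolding perm_code_def by (rule card_mono) auto
  then show ?thesis by simp
qed

lemma perm_code_self [simp]: "perm_code n w n = 0"
  by (simp add: perm_code_def)

lemma ex_permutes_perm_code:
  assumes "a \<in> (\<Pi>\<^sub>E p\<in>{1..n}. {0..n-p})"
  obtains w where "w permutes {1..n}" "\<And>p. p \<in> {1..n} \<Longrightarrow> perm_code n w p = a p"
proof -
  define P where "P = {w. w permutes {1..n}}"
  define C where "C = (\<Pi>\<^sub>E p\<in>{1..n}. {0..n-p})"
  define code where "code w = restrict (perm_code n w) {1..n}" for w
  have "inj_on code P"
  proof (rule inj_onI)
    fix w v assume "w \<in> P" "v \<in> P" and same_code: "code w = code v"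
    have "perm_code n w p = perm_code n v p" if "p \<in> {1..n}" for p
      using fun_cong[OF same_code, of p] that by (simp add: code_def)
    with \<open>w \<in> P\<close> \<open>v \<in> P\<close> show "w = v"
      unfolding P_def by (blast intro: permutes_eq_if_perm_code_eq)
  qed
  then have "card (code ` P) = fact n"
    by (simp add: card_image P_def card_permutations)
  also have "fact n = card C"
  proof -
    have "card C = (\<Prod>p=1..n. Suc (n - p))" by (simp add: C_def card_PiE)
    also have "\<dots> = (\<Prod>p=1..n. Suc (n - (n + 1 - p)))" by (rule prod.atLeastAtMost_rev)
    also have "\<dots> = (\<Prod>p=1..n. p)" by (rule prod.cong) auto
    finally show ?thesis by (simp add: fact_prod)
  qed
  moreover have "code ` P \<subseteq> C"
    by (auto simp: C_def code_def perm_code_le)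
  ultimately have "code ` P = C"
    by (intro card_subset_eq) (simp_all add: C_def finite_PiE)
  with assms obtain w where "w \<in> P" "code w = a" by (metis C_def imageE)
  moreover have "perm_code n w p = code w p" if "p \<in> {1..n}" for p
    using that by (simp add: code_def)
  ultimately show ?thesis using that by (simp add: P_def)
qed

lemma
  assumes "\<And>p. p \<in> {1..n} \<Longrightarrow> count (mset bs) p \<le> n - p"
  shows spectrum_perm_permutes: "spectrum_perm n bs permutes {1..n}"
    and perm_code_spectrum_perm:
      "p \<in> {1..n} \<Longrightarrow> perm_code n (spectrum_perm n bs) p = count (mset bs) p"
proof -
  have "restrict (count (mset bs)) {1..n} \<in> (\<Pi>\<^sub>E p\<in>{1..n}. {0..n-p})"
    using assms by simp
  then obtain w where w: "w permutes {1..n}"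
    and code: "\<And>p. p \<in> {1..n} \<Longrightarrow> perm_code n w p = count (mset bs) p"
    by (rule ex_permutes_perm_code) simp
  have "spectrum_perm n bs = w"
    unfolding spectrum_perm_def
  proof (rule the_equality)
    fix v
    assume v: "v permutes {1..n} \<and> (\<forall>p\<in>{1..n-1}. perm_code n v p = count (mset bs) p)"
    have "perm_code n v p = perm_code n w p" if "p \<in> {1..n}" for p
    proof (cases "p = n")
      case True
      then show ?thesis by simp
    next
      case False
      with that v code show ?thesis by auto
    qed
    with v w show "v = w" by (blast intro: permutes_eq_if_perm_code_eq)
  qed (use w code in auto)
  with w code show "spectrum_perm n bs permutes {1..n}"
    "p \<in> {1..n} \<Longrightarrow> perm_code n (spectrum_perm n bs) p = count (mset bs) p"
    by simp_all
qed

lemma ascent_iff_perm_code_le: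
  assumes w: "w permutes {1..n}" and p: "1 \<le> p" "Suc p \<le> n"
  shows "w p < w (Suc p) \<longleftrightarrow> perm_code n w p \<le> perm_code n w (Suc p)"
proof -
  define later_smaller where "later_smaller = {q \<in> {Suc p<..n}. w q < w p}"
  have "{p<..n} = insert (Suc p) {Suc p<..n}" using p by auto
  then have split: "{q \<in> {p<..n}. w q < w p} =
      (if w (Suc p) < w p then insert (Suc p) later_smaller else later_smaller)"
    by (auto simp: later_smaller_def)
  have "w p \<noteq> w (Suc p)" using permutes_inj[OF w] by (metis inj_eq n_not_Suc_n)
  then consider "w p < w (Suc p)" | "w (Suc p) < w p" by linarith
  then show ?thesis
  proof cases
    case 1
    then have "perm_code n w p = card later_smaller"
      unfolding perm_code_def split by simp
    also have "\<dots> \<le> perm_code n w (Suc p)"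
      unfolding perm_code_def later_smaller_def by (rule card_mono) (use 1 in auto)
    finally show ?thesis using 1 by simp
  next
    case 2
    then have "perm_code n w p = Suc (card later_smaller)"
      unfolding perm_code_def split by (simp add: later_smaller_def)
    moreover have "perm_code n w (Suc p) \<le> card later_smaller"
      unfolding perm_code_def later_smaller_def by (rule card_mono) (use 2 in auto)
    ultimately show ?thesis using 2 by simp
  qed
qed

definition inversions :: "nat \<Rightarrow> (nat \<Rightarrow> nat) \<Rightarrow> (nat \<times> nat) set" where
  "inversions n w = {(a, b). a \<in> {1..n} \<and> b \<in> {1..n} \<and> a < b \<and> w b < w a}"

lemma finite_inversions: "finite (inversions n w)"
  by (rule finite_subset[of _ "{1..n} \<times> {1..n}"]) (auto simp: inversions_def)

lemma inversions_comp_simple_refl: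
  assumes "1 \<le> p" "Suc p \<le> n" "w p < w (Suc p)"
  shows "insert (p, Suc p) (map_prod (simple_refl p) (simple_refl p) ` inversions n w)
    \<subseteq> inversions n (w \<circ> simple_refl p)"
proof -
  let ?s = "simple_refl p"
  have s_simps: "?s p = Suc p" "?s (Suc p) = p" "?s (?s x) = x" for x
    by (simp_all add: simple_refl_def)
  have "(p, Suc p) \<in> inversions n (w \<circ> ?s)"
    using assms s_simps by (simp add: inversions_def)
  moreover have "(?s a, ?s b) \<in> inversions n (w \<circ> ?s)" if "(a, b) \<in> inversions n w" for a b
  proof -
    from that have ab: "a \<in> {1..n}" "b \<in> {1..n}" "a < b" "w b < w a"
      by (auto simp: inversions_def)
    with assms(3) have "(a, b) \<noteq> (p, Suc p)" by auto
    with ab assms(1,2) have "?s a \<in> {1..n}" "?s b \<in> {1..n}" "?s a < ?s b"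
      by (auto simp: simple_refl_def transpose_def)
    with ab(4) s_simps(3) show ?thesis by (simp add: inversions_def)
  qed
  ultimately show ?thesis by auto
qed

lemma perm_length_less_comp_simple_refl:
  assumes "1 \<le> p" "Suc p \<le> n" "w p < w (Suc p)"
  shows "perm_length n w < perm_length n (w \<circ> simple_refl p)"
proof -
  let ?swap = "map_prod (simple_refl p) (simple_refl p)"
  have "inj ?swap"
    by (simp add: prod.inj_map inj_transpose simple_refl_def)
  then have "card (inversions n w) = card (?swap ` inversions n w)"
    by (simp add: card_image inj_on_subset)
  also have "\<dots> < card (insert (p, Suc p) (?swap ` inversions n w))"
  proof -
    have "(p, Suc p) = ?swap (Suc p, p)" by (simp add: simple_refl_def)
    moreover have "(Suc p, p) \<notin> inversions n w" by (simp add: inversions_def)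
    ultimately have "(p, Suc p) \<notin> ?swap ` inversions n w"
      by (metis \<open>inj ?swap\<close> inj_image_mem_iff)
    then show ?thesis by (simp add: finite_inversions)
  qed
  also have "\<dots> \<le> card (inversions n (w \<circ> simple_refl p))"
    by (rule card_mono[OF finite_inversions inversions_comp_simple_refl[OF assms]])
  finally show ?thesis by (simp add: perm_length_def inversions_def)
qed

lemma perm_length_less_comp_simple_refl_iff:
  assumes w: "w permutes {1..n}" and p: "1 \<le> p" "Suc p \<le> n"
  shows "perm_length n w < perm_length n (w \<circ> simple_refl p) \<longleftrightarrow> w p < w (Suc p)"
proof
  assume longer: "perm_length n w < perm_length n (w \<circ> simple_refl p)"
  show "w p < w (Suc p)"
  proof (rule ccontr)
    assume "\<not> w p < w (Suc p)"
    moreover have "w p \<noteq> w (Suc p)" using permutes_inj[OF w] by (metis inj_eq n_not_Suc_n)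
    ultimately have "(w \<circ> simple_refl p) p < (w \<circ> simple_refl p) (Suc p)"
      by (simp add: simple_refl_def)
    then have "perm_length n (w \<circ> simple_refl p) < perm_length n (w \<circ> simple_refl p \<circ> simple_refl p)"
      by (rule perm_length_less_comp_simple_refl[OF p])
    moreover have "w \<circ> simple_refl p \<circ> simple_refl p = w"
      by (simp add: simple_refl_def comp_assoc)
    ultimately show False using longer by simp
  qed
qed (rule perm_length_less_comp_simple_refl[OF p])

lemma min_reps_iff_perm_code:
  assumes "w permutes {1..n}" "Theta \<subseteq> {1..n-1}"
  shows "w \<in> min_reps n Theta \<longleftrightarrow> (\<forall>p\<in>Theta. perm_code n w p \<le> perm_code n w (Suc p))"
proof -
  have "perm_length n w < perm_length n (w \<circ> simple_refl p) \<longleftrightarrow>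
      perm_code n w p \<le> perm_code n w (Suc p)" if "p \<in> Theta" for p
  proof -
    have "1 \<le> p" "Suc p \<le> n" using subsetD[OF assms(2) that] by auto
    then show ?thesis
      by (simp add: perm_length_less_comp_simple_refl_iff[OF assms(1)] ascent_iff_perm_code_le[OF assms(1)])
  qed
  with assms(1) show ?thesis by (auto simp: min_reps_def)
qed

lemma spectrum_perm_in_min_reps_iff:
  assumes "\<And>p. p \<in> {1..n} \<Longrightarrow> count (mset bs) p \<le> n - p" and "Theta \<subseteq> {1..n-1}"
  shows "spectrum_perm n bs \<in> min_reps n Theta \<longleftrightarrow>
    (\<forall>p\<in>Theta. count (mset bs) p \<le> count (mset bs) (Suc p))"
proof -
  have "spectrum_perm n bs \<in> min_reps n Theta \<longleftrightarrow>
      (\<forall>p\<in>Theta. perm_code n (spectrum_perm n bs) p \<le> perm_code n (spectrum_perm n bs) (Suc p))"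
    by (rule min_reps_iff_perm_code[OF spectrum_perm_permutes[OF assms(1)] assms(2)])
  also have "\<dots> \<longleftrightarrow> (\<forall>p\<in>Theta. count (mset bs) p \<le> count (mset bs) (Suc p))"
  proof (rule ball_cong)
    fix p assume "p \<in> Theta"
    with assms(2) have "p \<in> {1..n-1}" by blast
    then have p: "p \<in> {1..n}" "Suc p \<in> {1..n}" by auto
    show "perm_code n (spectrum_perm n bs) p \<le> perm_code n (spectrum_perm n bs) (Suc p) \<longleftrightarrow>
        count (mset bs) p \<le> count (mset bs) (Suc p)"
      by (simp only: perm_code_spectrum_perm[OF assms(1) p(1)] perm_code_spectrum_perm[OF assms(1) p(2)])
  qed simp
  finally show ?thesis .
qed

lemma count_three_le_Suc_iff:
  fixes i j k :: nat
  assumes "i \<le> j" "j \<le> k"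
  shows "(\<forall>p\<in>Theta. count (mset [i, j, k]) p \<le> count (mset [i, j, k]) (Suc p)) \<longleftrightarrow>
    k \<notin> Theta \<and> (j \<in> Theta \<longrightarrow> k = Suc j) \<and> (i \<in> Theta \<longrightarrow> j = Suc i)"
proof -
  have count: "count (mset [i, j, k]) p =
      (if p = i then 1 else 0) + (if p = j then 1 else 0) + (if p = k then 1 else 0)" for p
    by simp
  show ?thesis
  proof
    assume mono: "\<forall>p\<in>Theta. count (mset [i, j, k]) p \<le> count (mset [i, j, k]) (Suc p)"
    show "k \<notin> Theta \<and> (j \<in> Theta \<longrightarrow> k = Suc j) \<and> (i \<in> Theta \<longrightarrow> j = Suc i)"
      using mono[rule_format, of k] mono[rule_format, of j] mono[rule_format, of i] assms
      unfolding count by (auto split: if_splits)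
  next
    assume "k \<notin> Theta \<and> (j \<in> Theta \<longrightarrow> k = Suc j) \<and> (i \<in> Theta \<longrightarrow> j = Suc i)"
    then show "\<forall>p\<in>Theta. count (mset [i, j, k]) p \<le> count (mset [i, j, k]) (Suc p)"
      using assms unfolding count by (auto split: if_splits)
  qed
qed

theorem lemma5p2:
  fixes n i j k :: nat and Theta :: "nat set"
  assumes "n \<ge> 2" and "Theta \<subseteq> {1..n-1}"
    and "i \<in> {1..n-3}" and "j \<in> {1..n-2}" and "k \<in> {1..n-1}"
    and "i \<le> j" and "j \<le> k"
  shows "spectrum_perm n [i, j, k] \<in> min_reps n Theta \<longleftrightarrow>
    ((i \<notin> Theta \<and> j \<notin> Theta \<and> k \<notin> Theta) \<or>
     (j = i + 1 \<and> i \<in> Theta \<and> i + 1 \<notin> Theta \<and> k \<notin> Theta) \<or>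
     (k = j + 1 \<and> j \<in> Theta \<and> i \<notin> Theta \<and> j + 1 \<notin> Theta) \<or>
     (k - 1 = j \<and> j = i + 1 \<and> i \<in> Theta \<and> i + 1 \<in> Theta \<and> i + 2 \<notin> Theta))"
proof -
  have "count (mset [i, j, k]) p \<le> n - p" if "p \<in> {1..n}" for p
    using assms(3-7) by auto
  then have "spectrum_perm n [i, j, k] \<in> min_reps n Theta \<longleftrightarrow>
      k \<notin> Theta \<and> (j \<in> Theta \<longrightarrow> k = Suc j) \<and> (i \<in> Theta \<longrightarrow> j = Suc i)"
    by (simp only: spectrum_perm_in_min_reps_iff assms(2) count_three_le_Suc_iff assms(6,7))
  moreover have "k - 1 = j \<longleftrightarrow> k = Suc j"
    using assms(5) by auto
  ultimately show ?thesis by auto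
qed

end
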